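(* Let $f:\mathbb{R}^{n_x}\to\mathbb{R}$ be twice continuously differentiable and let $\epsilon_x:\mathbb{R}^{n_x}\to[0,\infty)$. Consider the modified Newton iteration $$x^+ = x-\big(\nabla_{xx}f(x)+\epsilon_x(x)I\big)^{-1}\nabla_x f(x).$$ Let $x^*$ be an equilibrium point, i.e. $\nabla_x f(x^* )=0$. Assume that $\nabla_{xx}f(x^* )$ is invertible and that $\nabla_{xx}f(\cdot)$ is differentiable on a neighborhood of $x^*$. Assume that $\epsilon_x(\cdot)$ is constant on a neighborhood of $x^*$ and satisfies $\nabla_{xx}f(x^* )+\epsilon_x(x^* )I\succ 0$. Then: (i) if $x^*$ is a local minimum of $\min_{x\in\mathbb{R}^{n_x}} f(x)$, then $x^*$ is a locally asymptotically stable equilibrium of the iteration; (ii) if $x^*$ is not a local minimum of $\min_{x\in\mathbb{R}^{n_x}} f(x)$, then $x^*$ is an unstable equilibrium of the iteration.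
   Context: $\nabla_x f$ denotes the gradient and $\nabla_{xx}f$ the Hessian of $f$. The iteration is regarded as the discrete-time dynamical system $x_{k+1}=\Phi(x_k)$ with $\Phi(x)=x-(\nabla_{xx}f(x)+\epsilon_x(x)I)^{-1}\nabla_xf(x)$ (well defined near $x^*$); local asymptotic stability and instability are in the usual sense for such systems. *)

theory Defs
  imports "HOL-Analysis.Analysis"
begin

definition newton_map ::
  "(real^'n::finite \<Rightarrow> real^'n) \<Rightarrow> (real^'n \<Rightarrow> real^'n^'n) \<Rightarrow> (real^'n \<Rightarrow> real)
   \<Rightarrow> real^'n \<Rightarrow> real^'n" where
  "newton_map g H eps x = x - matrix_inv (H x + eps x *\<^sub>R mat 1) *v g x"

definition pos_def_matrix :: "real^'n::finite^'n \<Rightarrow> bool" where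
  "pos_def_matrix A \<longleftrightarrow> (\<forall>v. v \<noteq> 0 \<longrightarrow> v \<bullet> (A *v v) > 0)"

definition lyap_stable :: "('a::metric_space \<Rightarrow> 'a) \<Rightarrow> 'a \<Rightarrow> bool" where
  "lyap_stable Phi xs \<longleftrightarrow>
     (\<forall>e>0. \<exists>d>0. \<forall>x0. dist x0 xs < d \<longrightarrow> (\<forall>k. dist ((Phi ^^ k) x0) xs < e))"

definition loc_asym_stable :: "('a::metric_space \<Rightarrow> 'a) \<Rightarrow> 'a \<Rightarrow> bool" where
  "loc_asym_stable Phi xs \<longleftrightarrow> lyap_stable Phi xs \<and>
     (\<exists>d>0. \<forall>x0. dist x0 xs < d \<longrightarrow> (\<lambda>k. (Phi ^^ k) x0) \<longlonglongrightarrow> xs)"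

definition unstable :: "('a::metric_space \<Rightarrow> 'a) \<Rightarrow> 'a \<Rightarrow> bool" where
  "unstable Phi xs \<longleftrightarrow> \<not> lyap_stable Phi xs"

definition local_min :: "('a::metric_space \<Rightarrow> real) \<Rightarrow> 'a \<Rightarrow> bool" where
  "local_min f xs \<longleftrightarrow> (\<exists>r>0. \<forall>y\<in>ball xs r. f xs \<le> f y)"

end

theory Submission
  imports Defs
begin

text \<open>Near the equilibrium the shift eps is a constant c, and the Newton map satisfies
  M (Phi x - xs) = c (x - xs) + o(|x - xs|) with M = H xs + c I, so it behaves like the linear map
  c M^{-1}. The Hessian H xs is symmetric, because second differences of f are symmetric in
  their two directions. If xs is a local minimum, H xs is positive semidefinite, hence (being
  invertible) positive definite with some bound h, and the quadratic form of M yields the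
  contraction |Phi x - xs| <= (c + h/2)/(c + h) |x - xs|. Otherwise H xs has a direction of
  negative curvature, which forces c > 0, and V x = -(x - xs) . H xs (x - xs) is a Chetaev
  function: near xs it grows by a fixed factor at every step, it is positive at points arbitrarily
  close to xs and bounded on a ball, so some orbits starting near xs must leave that ball.\<close>

section \<open>Matrices and quadratic forms\<close>

lemma norm_matrix_vector_mult_le:
  fixes A :: "real^'n::finite^'m::finite"
  shows "norm (A *v x) \<le> norm A * norm x"
proof -
  have "norm (A *v x) = L2_set (\<lambda>i. \<bar>A $ i \<bullet> x\<bar>) UNIV"
    by (simp add: norm_vec_def matrix_mult_dot)
  also have "\<dots> \<le> L2_set (\<lambda>i. norm (A $ i) * norm x) UNIV"
    by (rule L2_set_mono) (simp_all add: Cauchy_Schwarz_ineq2)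
  also have "\<dots> = norm A * norm x"
    by (simp add: norm_vec_def L2_set_left_distrib)
  finally show ?thesis .
qed

lemma abs_quadratic_form_le:
  fixes A :: "real^'n::finite^'n"
  shows "\<bar>v \<bullet> (A *v v)\<bar> \<le> norm A * (norm v)\<^sup>2"
proof -
  have "\<bar>v \<bullet> (A *v v)\<bar> \<le> norm v * norm (A *v v)"
    by (rule Cauchy_Schwarz_ineq2)
  also have "\<dots> \<le> norm v * (norm A * norm v)"
    by (simp add: mult_left_mono norm_matrix_vector_mult_le)
  finally show ?thesis
    by (simp add: power2_eq_square ac_simps)
qed

lemma pos_def_matrix_coercive:
  fixes A :: "real^'n::finite^'n"
  assumes "pos_def_matrix A"
  obtains m where "m > 0" "\<And>v. m * (norm v)\<^sup>2 \<le> v \<bullet> (A *v v)"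
proof -
  let ?S = "sphere (0::real^'n) 1"
  have "?S \<noteq> {}"
    by (metis ex_in_conv mem_sphere_0 norm_axis_1)
  moreover have "continuous_on ?S (\<lambda>v. v \<bullet> (A *v v))"
    by (intro continuous_intros linear_continuous_on matrix_vector_mul_bounded_linear)
  ultimately obtain w where w: "w \<in> ?S" "\<And>u. u \<in> ?S \<Longrightarrow> w \<bullet> (A *v w) \<le> u \<bullet> (A *v u)"
    using continuous_attains_inf[OF compact_sphere] by blast
  have "w \<noteq> 0"
    using w(1) by auto
  then have "w \<bullet> (A *v w) > 0"
    using assms unfolding pos_def_matrix_def by blast
  moreover have "(w \<bullet> (A *v w)) * (norm v)\<^sup>2 \<le> v \<bullet> (A *v v)" for v
  proof (cases "v = 0")
    case False
    define u where "u = (1 / norm v) *\<^sub>R v"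
    have "u \<in> ?S" and v: "v = norm v *\<^sub>R u"
      using False by (simp_all add: u_def)
    have "v \<bullet> (A *v v) = (norm v)\<^sup>2 * (u \<bullet> (A *v u))"
      by (subst (1 2) v) (simp add: matrix_vector_mult_scaleR power2_eq_square algebra_simps)
    then show ?thesis
      using mult_right_mono[OF w(2)[OF \<open>u \<in> ?S\<close>] zero_le_power2[of "norm v"]]
      by (simp add: mult.commute)
  qed simp
  ultimately show ?thesis using that by blast
qed

lemma pos_def_matrix_invertible:
  fixes A :: "real^'n::finite^'n"
  assumes "pos_def_matrix A"
  shows "invertible A"
proof -
  have "A *v x = 0 \<Longrightarrow> x = 0" for x
    using assms unfolding pos_def_matrix_def by (metis inner_zero_right less_irrefl)
  then show ?thesis
    by (simp add: invertible_left_inverse matrix_left_invertible_ker)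
qed

lemma coercive_imp_pos_def_matrix:
  fixes A :: "real^'n::finite^'n"
  assumes "0 < m" and "\<And>v. m * (norm v)\<^sup>2 \<le> v \<bullet> (A *v v)"
  shows "pos_def_matrix A"
  unfolding pos_def_matrix_def
  using assms by (metis mult_pos_pos order.strict_trans2 zero_less_norm_iff zero_less_power)

lemma coercive_norm_matrix_vector_mult_ge:
  fixes A :: "real^'n::finite^'n"
  assumes "\<And>v. m * (norm v)\<^sup>2 \<le> v \<bullet> (A *v v)"
  shows "m * norm v \<le> norm (A *v v)"
proof (cases "v = 0")
  case False
  have "norm v * (m * norm v) \<le> norm v * norm (A *v v)"
    using order_trans[OF assms order_trans[OF abs_ge_self Cauchy_Schwarz_ineq2]]
    by (simp add: power2_eq_square ac_simps)
  then show ?thesis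
    using False by (simp add: mult_left_le_imp_le)
qed simp

lemma coercive_perturbation:
  fixes A B :: "real^'n::finite^'n"
  assumes "\<And>v. m * (norm v)\<^sup>2 \<le> v \<bullet> (A *v v)" and "norm (B - A) \<le> m / 2"
  shows "m / 2 * (norm v)\<^sup>2 \<le> v \<bullet> (B *v v)"
proof -
  have "v \<bullet> (B *v v) = v \<bullet> (A *v v) + v \<bullet> ((B - A) *v v)"
    by (simp add: matrix_vector_mult_diff_rdistrib inner_diff_right)
  moreover have "\<bar>v \<bullet> ((B - A) *v v)\<bar> \<le> norm (B - A) * (norm v)\<^sup>2"
    by (rule abs_quadratic_form_le)
  moreover have "norm (B - A) * (norm v)\<^sup>2 \<le> m / 2 * (norm v)\<^sup>2"
    using assms(2) by (rule mult_right_mono) simp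
  ultimately show ?thesis
    using assms(1)[of v] abs_le_iff[of "v \<bullet> ((B - A) *v v)"] by linarith
qed

lemma matrix_vector_mult_matrix_inv:
  fixes A :: "'a::semiring_1^'n::finite^'n"
  assumes "invertible A"
  shows "A *v (matrix_inv A *v x) = x"
  using someI_ex[OF assms[unfolded invertible_def]]
  by (simp add: matrix_inv_def matrix_vector_mul_assoc)

lemma symmetric_psd_invertible_pos_def:
  fixes A :: "real^'n::finite^'n"
  assumes sym: "\<And>u v. u \<bullet> (A *v v) = v \<bullet> (A *v u)"
    and psd: "\<And>v. 0 \<le> v \<bullet> (A *v v)" and "invertible A"
  shows "pos_def_matrix A"
  unfolding pos_def_matrix_def
proof (intro allI impI)
  fix v :: "real^'n" assume "v \<noteq> 0"
  then have "A *v v \<noteq> 0"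
    using inj_matrix_vector_mult[OF \<open>invertible A\<close>] by (metis injD matrix_vector_mult_0_right)
  show "v \<bullet> (A *v v) > 0"
  proof (rule ccontr)
    assume "\<not> v \<bullet> (A *v v) > 0"
    then have zero: "v \<bullet> (A *v v) = 0" using psd[of v] by linarith
    define w where "w = A *v v"
    define s where "s = (norm w)\<^sup>2 / (\<bar>w \<bullet> (A *v w)\<bar> + 1)"
    have "(norm w)\<^sup>2 > 0" using \<open>A *v v \<noteq> 0\<close> by (simp add: w_def)
    then have s: "s > 0" "s * \<bar>w \<bullet> (A *v w)\<bar> < (norm w)\<^sup>2"
      by (simp_all add: s_def field_simps)
    \<comment> \<open>moving from the null vector v towards -Av makes the form negative\<close>
    have "(v - s *\<^sub>R w) \<bullet> (A *v (v - s *\<^sub>R w)) = s * (s * (w \<bullet> (A *v w)) - 2 * (norm w)\<^sup>2)"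
      using zero sym[of v w]
      by (simp add: matrix_vector_mult_diff_distrib inner_diff_left inner_diff_right
          power2_norm_eq_inner w_def algebra_simps)
    also have "\<dots> < 0"
    proof (rule mult_pos_neg)
      have "s * (w \<bullet> (A *v w)) \<le> s * \<bar>w \<bullet> (A *v w)\<bar>"
        using s(1) by (simp add: mult_left_mono)
      then show "s * (w \<bullet> (A *v w)) - 2 * (norm w)\<^sup>2 < 0"
        using s(2) \<open>(norm w)\<^sup>2 > 0\<close> by linarith
    qed (use s in simp)
    finally show False using psd[of "v - s *\<^sub>R w"] by linarith
  qed
qed

lemma coercive_approx_contraction:
  fixes A :: "real^'n::finite^'n"
  assumes "0 \<le> c" "0 < h" and coercive: "\<And>v. h * (norm v)\<^sup>2 \<le> v \<bullet> (A *v v)"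
    and approx: "norm ((A + c *\<^sub>R mat 1) *v y' - c *\<^sub>R y) \<le> h / 2 * norm y"
  shows "norm y' \<le> (c + h / 2) / (c + h) * norm y"
proof -
  define e where "e = (A + c *\<^sub>R mat 1) *v y' - c *\<^sub>R y"
  have "(c + h) * (norm y')\<^sup>2 \<le> y' \<bullet> ((A + c *\<^sub>R mat 1) *v y')"
    using coercive[of y']
    by (simp add: matrix_vector_mult_add_rdistrib scaleR_matrix_vector_assoc[symmetric]
        inner_add_right power2_norm_eq_inner algebra_simps)
  also have "\<dots> = c * (y' \<bullet> y) + y' \<bullet> e"
    by (simp add: e_def inner_diff_right)
  also have "\<dots> \<le> c * (norm y' * norm y) + norm y' * norm e"
    using Cauchy_Schwarz_ineq2[of y' y] Cauchy_Schwarz_ineq2[of y' e] \<open>0 \<le> c\<close>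
    by (intro add_mono mult_left_mono) auto
  also have "\<dots> \<le> norm y' * ((c + h / 2) * norm y)"
    using mult_left_mono[OF approx[folded e_def], of "norm y'"] by (simp add: algebra_simps)
  finally have "(c + h) * (norm y')\<^sup>2 \<le> norm y' * ((c + h / 2) * norm y)" .
  then have "(c + h) * norm y' \<le> (c + h / 2) * norm y"
    by (cases "y' = 0") (use assms(1,2) in \<open>simp_all add: power2_eq_square\<close>)
  then show ?thesis
    using assms(1,2) by (simp add: field_simps)
qed

lemma coercive_perturbed_system_estimate:
  fixes M D :: "real^'n::finite^'n"
  assumes "0 < m" and coercive: "\<And>v. m * (norm v)\<^sup>2 \<le> v \<bullet> (M *v v)"
    and D: "norm D \<le> \<eta>" "\<eta> \<le> m / 2" "\<eta> \<le> 1"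
    and R: "norm R \<le> \<rho> * norm y" "\<rho> \<le> 1"
    and eq: "(M + D) *v y' = D *v y + c *\<^sub>R y - R"
  shows "norm (M *v y' - c *\<^sub>R y) \<le> (\<eta> * (2 * (\<bar>c\<bar> + 2) / m + 1) + \<rho>) * norm y"
proof -
  define L where "L = 2 * (\<bar>c\<bar> + 2) / m"
  have DM: "norm ((M + D) - M) \<le> m / 2"
    using D by simp
  have bound: "norm ((M + D) *v y') \<le> (\<bar>c\<bar> + 2) * norm y"
  proof -
    have "norm ((M + D) *v y') \<le> norm (D *v y + c *\<^sub>R y) + norm R"
      unfolding eq by (rule norm_triangle_ineq4)
    also have "\<dots> \<le> norm (D *v y) + \<bar>c\<bar> * norm y + norm R"
      using norm_triangle_ineq[of "D *v y" "c *\<^sub>R y"] by simp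
    also have "\<dots> \<le> \<eta> * norm y + \<bar>c\<bar> * norm y + \<rho> * norm y"
      using norm_matrix_vector_mult_le[of D y] mult_right_mono[OF D(1), of "norm y"] R(1) by simp
    also have "\<dots> \<le> (\<bar>c\<bar> + 2) * norm y"
      using mult_right_mono[OF D(3), of "norm y"] mult_right_mono[OF R(2), of "norm y"]
      by (simp add: algebra_simps)
    finally show ?thesis .
  qed
  have "m / 2 * norm y' \<le> (\<bar>c\<bar> + 2) * norm y"
    using coercive_norm_matrix_vector_mult_ge[OF coercive_perturbation[OF coercive DM]] bound by (rule order_trans)
  then have ny': "norm y' \<le> L * norm y"
    using \<open>0 < m\<close> by (simp add: L_def field_simps)
  have err: "M *v y' - c *\<^sub>R y = D *v y - R - D *v y'"
    using eq by (simp add: matrix_vector_mult_add_rdistrib algebra_simps)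
  have "norm (M *v y' - c *\<^sub>R y) \<le> norm (D *v y) + norm R + norm (D *v y')"
    unfolding err using norm_triangle_ineq4[of "D *v y - R" "D *v y'"] norm_triangle_ineq4[of "D *v y" R]
    by linarith
  also have "\<dots> \<le> \<eta> * norm y + \<rho> * norm y + \<eta> * (L * norm y)"
  proof (intro add_mono)
    show "norm (D *v y) \<le> \<eta> * norm y" "norm (D *v y') \<le> \<eta> * (L * norm y)"
      using D(1) ny' order_trans[OF norm_ge_zero D(1)]
      by (auto intro!: order_trans[OF norm_matrix_vector_mult_le] mult_mono)
  qed (use R(1) in simp)
  finally show ?thesis
    by (simp add: L_def algebra_simps)
qed

lemma symmetric_quadratic_form_diff_le:
  fixes A :: "real^'n::finite^'n"
  assumes sym: "\<And>u v. u \<bullet> (A *v v) = v \<bullet> (A *v u)"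
  shows "\<bar>a \<bullet> (A *v a) - b \<bullet> (A *v b)\<bar> \<le> norm A * norm (a - b) * norm (a + b)"
proof -
  have "a \<bullet> (A *v a) - b \<bullet> (A *v b) = (a - b) \<bullet> (A *v (a + b))"
    using sym[of a b] by (simp add: matrix_vector_right_distrib inner_diff_left inner_add_right)
  also have "\<bar>\<dots>\<bar> \<le> norm (a - b) * (norm A * norm (a + b))"
    using Cauchy_Schwarz_ineq2 norm_matrix_vector_mult_le
    by (rule order_trans[OF _ mult_left_mono[OF _ norm_ge_zero]])
  finally show ?thesis
    by (simp add: ac_simps)
qed

lemma symmetric_quadratic_form_shift_ge:
  fixes A :: "real^'n::finite^'n" and c :: real
  assumes sym: "\<And>u v. u \<bullet> (A *v v) = v \<bullet> (A *v u)" and "0 \<le> c" and "0 \<le> \<sigma>"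
    and psd: "\<And>w. 0 \<le> w \<bullet> ((A + c *\<^sub>R mat 1) *v w)"
    and lower: "\<And>z. \<sigma> * norm z \<le> norm (A *v z)"
  defines "M \<equiv> A + c *\<^sub>R mat 1"
  shows "c * \<sigma>\<^sup>2 * (norm y)\<^sup>2 \<le> (M *v y) \<bullet> (A *v (M *v y)) - c\<^sup>2 * (y \<bullet> (A *v y))"
proof -
  define w where "w = A *v y"
  have Mz: "M *v z = A *v z + c *\<^sub>R z" for z
    by (simp add: M_def matrix_vector_mult_add_rdistrib scaleR_matrix_vector_assoc[symmetric])
  have "y \<bullet> (A *v w) = w \<bullet> w" "w \<bullet> (A *v y) = w \<bullet> w"
    using sym[of y w] by (simp_all add: w_def)
  then have "(M *v y) \<bullet> (A *v (M *v y)) - c\<^sup>2 * (y \<bullet> (A *v y)) = w \<bullet> (M *v w) + c * (w \<bullet> w)"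
    by (simp add: Mz w_def[symmetric] matrix_vector_right_distrib inner_add_left inner_add_right
        matrix_vector_mult_scaleR power2_eq_square algebra_simps)
  moreover have "(\<sigma> * norm y)\<^sup>2 \<le> (norm w)\<^sup>2"
    using lower[of y] \<open>0 \<le> \<sigma>\<close> by (simp add: w_def power_mono)
  then have "c * \<sigma>\<^sup>2 * (norm y)\<^sup>2 \<le> c * (w \<bullet> w)"
    using \<open>0 \<le> c\<close> by (simp add: mult_left_mono power_mult_distrib mult.assoc
        flip: power2_norm_eq_inner)
  ultimately show ?thesis
    using psd[of w] by (simp add: M_def)
qed

lemma symmetric_quadratic_form_decrease_estimate:
  fixes A :: "real^'n::finite^'n"
  assumes sym: "\<And>u v. u \<bullet> (A *v v) = v \<bullet> (A *v u)" and "0 < c" and "0 \<le> \<sigma>"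
    and psd: "\<And>w. 0 \<le> w \<bullet> ((A + c *\<^sub>R mat 1) *v w)"
    and lower: "\<And>z. \<sigma> * norm z \<le> norm (A *v z)"
  defines "M \<equiv> A + c *\<^sub>R mat 1"
  assumes \<delta>: "0 \<le> \<delta>" "\<delta> \<le> c / 2" "6 * norm A * norm M * (2 * norm M / c) * \<delta> \<le> c * \<sigma>\<^sup>2"
    and approx: "norm (M *v y' - c *\<^sub>R y) \<le> \<delta> * norm y"
  shows "y' \<bullet> (A *v y') + \<sigma>\<^sup>2 / (2 * c) * (norm y')\<^sup>2 \<le> y \<bullet> (A *v y)"
proof -
  define Q where "Q z = z \<bullet> (A *v z)" for z
  define C where "C = 2 * norm M / c"
  define a where "a = M *v y'"
  define e where "e = a - c *\<^sub>R y"
  have "c * norm y \<le> norm a + norm e"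
    using norm_triangle_ineq4[of a e] \<open>0 < c\<close> by (simp add: e_def)
  also have "\<dots> \<le> norm M * norm y' + c / 2 * norm y"
    using norm_matrix_vector_mult_le[of M y'] approx mult_right_mono[OF \<delta>(2), of "norm y"]
    by (simp add: a_def e_def)
  finally have "norm y \<le> C * norm y'"
    using \<open>0 < c\<close> by (simp add: C_def field_simps)
  then have ne: "norm e \<le> \<delta> * C * norm y'"
    using order_trans[OF approx mult_left_mono[OF _ \<delta>(1)]] by (simp add: a_def e_def mult.assoc)
  have "\<delta> * C \<le> norm M"
    using mult_right_mono[OF \<delta>(2), of C] \<open>0 < c\<close> by (simp add: C_def)
  then have "norm e \<le> norm M * norm y'"
    using ne mult_right_mono[of "\<delta> * C" "norm M" "norm y'"] by simp
  moreover have "a + c *\<^sub>R y = 2 *\<^sub>R a - e"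
    by (simp add: e_def scaleR_2)
  ultimately have sum: "norm (a + c *\<^sub>R y) \<le> 3 * norm M * norm y'"
    using norm_triangle_ineq4[of "2 *\<^sub>R a" e] norm_matrix_vector_mult_le[of M y'] by (simp add: a_def)
  \<comment> \<open>the error e only perturbs Q (c y) by a small multiple of |y'|^2\<close>
  have "\<bar>Q a - Q (c *\<^sub>R y)\<bar> \<le> norm A * norm e * norm (a + c *\<^sub>R y)"
    unfolding Q_def e_def by (rule symmetric_quadratic_form_diff_le[OF sym])
  also have "\<dots> \<le> norm A * (\<delta> * C * norm y') * (3 * norm M * norm y')"
    using ne sum \<delta>(1) \<open>0 < c\<close> by (intro mult_mono mult_left_mono) (auto simp: C_def)
  also have "\<dots> \<le> c * \<sigma>\<^sup>2 / 2 * (norm y')\<^sup>2"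
    using mult_right_mono[OF \<delta>(3), of "(norm y')\<^sup>2 / 2"]
    by (simp add: C_def power2_eq_square algebra_simps)
  finally have "\<bar>Q a - c\<^sup>2 * Q y\<bar> \<le> c * \<sigma>\<^sup>2 * (norm y')\<^sup>2 / 2"
    by (simp add: Q_def matrix_vector_mult_scaleR power2_eq_square mult.assoc)
  moreover have "c * \<sigma>\<^sup>2 * (norm y')\<^sup>2 \<le> Q a - c\<^sup>2 * Q y'"
    unfolding Q_def a_def M_def
    by (rule symmetric_quadratic_form_shift_ge[OF sym less_imp_le[OF \<open>0 < c\<close>] \<open>0 \<le> \<sigma>\<close> psd lower])
  ultimately have "c\<^sup>2 * Q y' + c * \<sigma>\<^sup>2 * (norm y')\<^sup>2 / 2 \<le> c\<^sup>2 * Q y"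
    using abs_le_iff[of "Q a - c\<^sup>2 * Q y"] by linarith
  moreover have "c * \<sigma>\<^sup>2 * (norm y')\<^sup>2 / 2 = c\<^sup>2 * (\<sigma>\<^sup>2 / (2 * c) * (norm y')\<^sup>2)"
    using \<open>0 < c\<close> by (simp add: power2_eq_square)
  ultimately have "c\<^sup>2 * (Q y' + \<sigma>\<^sup>2 / (2 * c) * (norm y')\<^sup>2) \<le> c\<^sup>2 * Q y"
    unfolding distrib_left by linarith
  then show ?thesis
    using \<open>0 < c\<close> by (simp add: Q_def)
qed

lemma symmetric_quadratic_form_decrease:
  fixes A :: "real^'n::finite^'n"
  assumes sym: "\<And>u v. u \<bullet> (A *v v) = v \<bullet> (A *v u)" and "invertible A" and "0 < c"
    and psd: "\<And>w. 0 \<le> w \<bullet> ((A + c *\<^sub>R mat 1) *v w)"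
  obtains \<delta> \<kappa> where "0 < \<delta>" "0 < \<kappa>"
    "\<And>y y'. norm ((A + c *\<^sub>R mat 1) *v y' - c *\<^sub>R y) \<le> \<delta> * norm y \<Longrightarrow>
       y' \<bullet> (A *v y') + \<kappa> * (norm y')\<^sup>2 \<le> y \<bullet> (A *v y)"
proof -
  obtain \<sigma> where "0 < \<sigma>" and lower: "\<And>z. \<sigma> * norm z \<le> norm (A *v z)"
    using linear_inj_bounded_below_pos[OF matrix_vector_mul_linear
        inj_matrix_vector_mult[OF \<open>invertible A\<close>]] by blast
  define N where "N = norm A * norm (A + c *\<^sub>R mat 1) * (2 * norm (A + c *\<^sub>R mat 1) / c)"
  define \<delta> where "\<delta> = min (c / 2) (c * \<sigma>\<^sup>2 / (6 * N + 1))"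
  have "0 \<le> N" using \<open>0 < c\<close> by (simp add: N_def)
  have "0 < \<delta>" using \<open>0 < c\<close> \<open>0 < \<sigma>\<close> \<open>0 \<le> N\<close> by (simp add: \<delta>_def)
  have "\<delta> \<le> c / 2" unfolding \<delta>_def by (rule min.cobounded1)
  have "\<delta> \<le> c * \<sigma>\<^sup>2 / (6 * N + 1)"
    by (simp add: \<delta>_def)
  then have "(6 * N + 1) * \<delta> \<le> c * \<sigma>\<^sup>2"
    using \<open>0 \<le> N\<close> by (simp add: field_simps)
  then have "6 * N * \<delta> \<le> c * \<sigma>\<^sup>2"
    using \<open>0 < \<delta>\<close> by (simp add: algebra_simps)
  then have small: "6 * norm A * norm (A + c *\<^sub>R mat 1) * (2 * norm (A + c *\<^sub>R mat 1) / c) * \<delta>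
      \<le> c * \<sigma>\<^sup>2"
    by (simp add: N_def mult.assoc)
  show ?thesis
  proof (rule that)
    show "0 < \<delta>" "0 < \<sigma>\<^sup>2 / (2 * c)"
      using \<open>0 < \<delta>\<close> \<open>0 < \<sigma>\<close> \<open>0 < c\<close> by simp_all
  next
    fix y y' assume "norm ((A + c *\<^sub>R mat 1) *v y' - c *\<^sub>R y) \<le> \<delta> * norm y"
    then show "y' \<bullet> (A *v y') + \<sigma>\<^sup>2 / (2 * c) * (norm y')\<^sup>2 \<le> y \<bullet> (A *v y)"
      by (rule symmetric_quadratic_form_decrease_estimate[OF sym \<open>0 < c\<close>
            less_imp_le[OF \<open>0 < \<sigma>\<close>] psd lower less_imp_le[OF \<open>0 < \<delta>\<close>] \<open>\<delta> \<le> c / 2\<close> small])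
  qed
qed

section \<open>Stability and instability of fixed points\<close>

lemma dist_funpow_le_if_contraction:
  fixes \<Phi> :: "'a::metric_space \<Rightarrow> 'a"
  assumes "0 \<le> q" "q \<le> 1" and "dist x xs < r"
    and contr: "\<And>x. dist x xs < r \<Longrightarrow> dist (\<Phi> x) xs \<le> q * dist x xs"
  shows "dist ((\<Phi> ^^ k) x) xs \<le> q ^ k * dist x xs"
proof (induction k)
  case (Suc k)
  have "q ^ k * dist x xs \<le> dist x xs"
    using assms(1,2) by (simp add: mult_left_le_one_le power_le_one)
  then have "dist ((\<Phi> ^^ k) x) xs < r"
    using Suc.IH \<open>dist x xs < r\<close> by linarith
  then have "dist ((\<Phi> ^^ Suc k) x) xs \<le> q * dist ((\<Phi> ^^ k) x) xs"
    by (simp add: contr)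
  also have "\<dots> \<le> q * (q ^ k * dist x xs)"
    using Suc.IH assms(1) by (rule mult_left_mono)
  finally show ?case by simp
qed simp

lemma loc_asym_stable_if_contraction:
  fixes \<Phi> :: "'a::metric_space \<Rightarrow> 'a"
  assumes "0 < r" "0 \<le> q" "q < 1"
    and contr: "\<And>x. dist x xs < r \<Longrightarrow> dist (\<Phi> x) xs \<le> q * dist x xs"
  shows "loc_asym_stable \<Phi> xs"
proof -
  have orbit: "dist ((\<Phi> ^^ k) x) xs \<le> q ^ k * dist x xs" if "dist x xs < r" for x k
    using dist_funpow_le_if_contraction[OF assms(2) _ that contr] assms(3) by simp
  have "lyap_stable \<Phi> xs"
    unfolding lyap_stable_def
  proof (intro allI impI)
    fix e :: real assume "0 < e"
    have "dist ((\<Phi> ^^ k) x) xs < e" if "dist x xs < min e r" for x k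
    proof -
      have "q ^ k * dist x xs \<le> dist x xs"
        using assms(2,3) by (simp add: mult_left_le_one_le power_le_one)
      then show ?thesis
        using orbit[of x k] that by simp
    qed
    then show "\<exists>d>0. \<forall>x. dist x xs < d \<longrightarrow> (\<forall>k. dist ((\<Phi> ^^ k) x) xs < e)"
      using \<open>0 < e\<close> \<open>0 < r\<close> by (intro exI[of _ "min e r"]) auto
  qed
  moreover have "(\<lambda>k. (\<Phi> ^^ k) x) \<longlonglongrightarrow> xs" if "dist x xs < r" for x
  proof -
    have lim: "(\<lambda>k. q ^ k * dist x xs) \<longlonglongrightarrow> 0"
      using assms(2,3) by (intro tendsto_mult_left_zero LIMSEQ_power_zero) simp
    have bound: "\<forall>\<^sub>F k in sequentially. norm (dist ((\<Phi> ^^ k) x) xs) \<le> q ^ k * dist x xs"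
      using orbit[OF that] by simp
    show ?thesis
      using Lim_null_comparison[OF bound lim]
      by (rule tendsto_dist_iff[THEN iffD2])
  qed
  ultimately show ?thesis
    unfolding loc_asym_stable_def using \<open>0 < r\<close> by blast
qed

lemma unstable_if_growing_function:
  fixes \<Phi> :: "'a::metric_space \<Rightarrow> 'a" and V :: "'a \<Rightarrow> real"
  assumes "0 < r" "0 < \<rho>"
    and bounded: "\<And>x. dist x xs < r \<Longrightarrow> V x \<le> B"
    and growth: "\<And>x. dist x xs < r \<Longrightarrow> (1 + \<rho>) * V x \<le> V (\<Phi> x)"
    and positive: "\<And>d. 0 < d \<Longrightarrow> \<exists>x. dist x xs < d \<and> 0 < V x"
  shows "unstable \<Phi> xs"
  unfolding unstable_def
proof
  assume "lyap_stable \<Phi> xs"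
  then obtain d where "0 < d" and stay: "\<And>x k. dist x xs < d \<Longrightarrow> dist ((\<Phi> ^^ k) x) xs < r"
    using \<open>0 < r\<close> unfolding lyap_stable_def by blast
  obtain x where x: "dist x xs < d" "0 < V x"
    using positive[OF \<open>0 < d\<close>] by blast
  have grows: "(1 + \<rho>) ^ k * V x \<le> V ((\<Phi> ^^ k) x)" for k
  proof (induction k)
    case (Suc k)
    have "(1 + \<rho>) ^ Suc k * V x \<le> (1 + \<rho>) * V ((\<Phi> ^^ k) x)"
      using Suc.IH \<open>0 < \<rho>\<close> by (simp add: mult.assoc mult_left_mono)
    also have "\<dots> \<le> V ((\<Phi> ^^ Suc k) x)"
      using growth[OF stay[OF x(1)]] by simp
    finally show ?case .
  qed simp
  have "1 < 1 + \<rho>"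
    using \<open>0 < \<rho>\<close> by simp
  then obtain k where "B / V x < (1 + \<rho>) ^ k"
    using real_arch_pow by blast
  then have "B < (1 + \<rho>) ^ k * V x"
    using x(2) by (simp add: field_simps)
  then show False
    using grows[of k] bounded[OF stay[OF x(1), of k]] by linarith
qed

section \<open>Gradient and Hessian\<close>

lemma has_derivative_remainder_bound:
  assumes "(F has_derivative F') (at x)" and "0 < e"
  obtains d where "0 < d" "\<And>y. norm (y - x) < d \<Longrightarrow> norm (F y - F x - F' (y - x)) \<le> e * norm (y - x)"
  using assms unfolding has_derivative_at_alt by blast

locale gradient_hessian =
  fixes f :: "real^'n::finite \<Rightarrow> real"
    and g :: "real^'n \<Rightarrow> real^'n"
    and H :: "real^'n \<Rightarrow> real^'n^'n"
  assumes gradient: "\<And>x. (f has_derivative (\<lambda>h. g x \<bullet> h)) (at x)"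
    and hessian: "\<And>x. (g has_derivative (\<lambda>h. H x *v h)) (at x)"
begin

lemma has_real_derivative_along_line:
  "((\<lambda>t. f (a + t *\<^sub>R b)) has_real_derivative (g (a + t *\<^sub>R b) \<bullet> b)) (at t)"
proof -
  have "((\<lambda>t. a + t *\<^sub>R b) has_derivative (\<lambda>s. s *\<^sub>R b)) (at t)"
    by (auto intro!: derivative_eq_intros)
  from has_derivative_compose[OF this gradient]
  show ?thesis
    by (rule has_derivative_imp_has_field_derivative) (simp add: o_def)
qed

lemma mean_value_along_line:
  assumes "0 < s"
  obtains \<xi> where "0 < \<xi>" "\<xi> < s" "f (a + s *\<^sub>R b) - f a = s * (g (a + \<xi> *\<^sub>R b) \<bullet> b)"
  using MVT2[OF assms, of "\<lambda>t. f (a + t *\<^sub>R b)", OF has_real_derivative_along_line] that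
  by auto

lemma mean_value_along_parallel_lines:
  assumes "0 < s"
  obtains \<xi> where "0 < \<xi>" "\<xi> < s"
    "(f (a + s *\<^sub>R b) - f (c + s *\<^sub>R b)) - (f a - f c) = s * ((g (a + \<xi> *\<^sub>R b) - g (c + \<xi> *\<^sub>R b)) \<bullet> b)"
proof -
  have "((\<lambda>t. f (a + t *\<^sub>R b) - f (c + t *\<^sub>R b)) has_real_derivative
      ((g (a + t *\<^sub>R b) - g (c + t *\<^sub>R b)) \<bullet> b)) (at t)" for t
    using DERIV_diff[OF has_real_derivative_along_line has_real_derivative_along_line]
    by (simp add: inner_diff_left)
  from MVT2[OF assms, of "\<lambda>t. f (a + t *\<^sub>R b) - f (c + t *\<^sub>R b)", OF this] that
  show ?thesis by auto
qed

lemma second_difference_remainder_le: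
  assumes "0 < t" and "t * (norm p + norm q) < d" and "0 \<le> e"
    and rem: "\<And>y. norm (y - x) < d \<Longrightarrow> norm (g y - g x - H x *v (y - x)) \<le> e * norm (y - x)"
  shows "\<bar>f (x + t *\<^sub>R p + t *\<^sub>R q) - f (x + t *\<^sub>R p) - f (x + t *\<^sub>R q) + f x - t\<^sup>2 * (p \<bullet> (H x *v q))\<bar>
    \<le> e * t\<^sup>2 * ((2 * norm p + norm q) * norm p)"
proof -
  define E where "E y = g y - g x - H x *v (y - x)" for y
  obtain \<xi> where \<xi>: "0 < \<xi>" "\<xi> < t"
    and mvt: "(f (x + t *\<^sub>R q + t *\<^sub>R p) - f (x + t *\<^sub>R p)) - (f (x + t *\<^sub>R q) - f x) =
      t * ((g (x + t *\<^sub>R q + \<xi> *\<^sub>R p) - g (x + \<xi> *\<^sub>R p)) \<bullet> p)"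
    using mean_value_along_parallel_lines[OF \<open>0 < t\<close>, of "x + t *\<^sub>R q" p x] by auto
  define y1 where "y1 = x + t *\<^sub>R q + \<xi> *\<^sub>R p"
  define y2 where "y2 = x + \<xi> *\<^sub>R p"
  have "norm (\<xi> *\<^sub>R p) \<le> t * norm p"
    using \<xi> by (simp add: mult_right_mono)
  then have near: "norm (y1 - x) \<le> t * (norm p + norm q)" "norm (y2 - x) \<le> t * norm p"
    using norm_triangle_ineq[of "t *\<^sub>R q" "\<xi> *\<^sub>R p"] \<open>0 < t\<close>
    by (simp_all add: y1_def y2_def algebra_simps)
  then have "norm (y1 - x) < d" "norm (y2 - x) < d"
    using \<open>0 < t\<close> \<open>t * (norm p + norm q) < d\<close> by (smt (verit) mult_left_mono norm_ge_zero)+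
  then have "norm (E y1) \<le> e * norm (y1 - x)" "norm (E y2) \<le> e * norm (y2 - x)"
    by (simp_all add: E_def rem)
  then have "norm (E y1) \<le> e * (t * (norm p + norm q))" "norm (E y2) \<le> e * (t * norm p)"
    using mult_left_mono[OF near(1) \<open>0 \<le> e\<close>] mult_left_mono[OF near(2) \<open>0 \<le> e\<close>] by simp_all
  then have "norm (E y1 - E y2) \<le> e * t * (2 * norm p + norm q)"
    using norm_triangle_ineq4[of "E y1" "E y2"] by (simp add: algebra_simps)
  then have "\<bar>(E y1 - E y2) \<bullet> p\<bar> \<le> e * t * (2 * norm p + norm q) * norm p"
    by (rule order_trans[OF Cauchy_Schwarz_ineq2 mult_right_mono[OF _ norm_ge_zero]])
  then have bound: "\<bar>t * ((E y1 - E y2) \<bullet> p)\<bar> \<le> t * (e * t * (2 * norm p + norm q) * norm p)"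
    using \<open>0 < t\<close> by (simp add: abs_mult)
  have gdiff: "g y1 - g y2 = t *\<^sub>R (H x *v q) + (E y1 - E y2)"
    by (simp add: E_def y1_def y2_def matrix_vector_mult_diff_distrib
        matrix_vector_right_distrib matrix_vector_mult_scaleR)
  have "(g y1 - g y2) \<bullet> p = t * (p \<bullet> (H x *v q)) + (E y1 - E y2) \<bullet> p"
    unfolding gdiff inner_add_left inner_scaleR_left by (simp add: inner_commute)
  moreover have "f (x + t *\<^sub>R p + t *\<^sub>R q) - f (x + t *\<^sub>R p) - f (x + t *\<^sub>R q) + f x
      = t * ((g y1 - g y2) \<bullet> p)"
    using mvt by (simp add: y1_def y2_def algebra_simps)
  ultimately have "f (x + t *\<^sub>R p + t *\<^sub>R q) - f (x + t *\<^sub>R p) - f (x + t *\<^sub>R q) + f x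
      - t\<^sup>2 * (p \<bullet> (H x *v q)) = t * ((E y1 - E y2) \<bullet> p)"
    by (simp add: power2_eq_square distrib_left)
  then show ?thesis
    using bound by (simp add: power2_eq_square ac_simps)
qed

lemma second_difference_estimate:
  assumes "0 < e"
  obtains d where "0 < d" "\<And>t. 0 < t \<Longrightarrow> t < d \<Longrightarrow>
    \<bar>f (x + t *\<^sub>R p + t *\<^sub>R q) - f (x + t *\<^sub>R p) - f (x + t *\<^sub>R q) + f x - t\<^sup>2 * (p \<bullet> (H x *v q))\<bar>
      \<le> e * t\<^sup>2"
proof -
  define K where "K = (2 * norm p + norm q) * norm p"
  have "0 \<le> K" by (simp add: K_def)
  then obtain d' where "0 < d'" and rem: "\<And>y. norm (y - x) < d' \<Longrightarrow>
      norm (g y - g x - H x *v (y - x)) \<le> e / (K + 1) * norm (y - x)"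
    using has_derivative_remainder_bound[OF hessian, of "e / (K + 1)"] \<open>0 < e\<close> by auto
  have "0 < norm p + norm q + 1"
    by (simp add: add_nonneg_pos)
  define d where "d = d' / (norm p + norm q + 1)"
  have "\<bar>f (x + t *\<^sub>R p + t *\<^sub>R q) - f (x + t *\<^sub>R p) - f (x + t *\<^sub>R q) + f x
      - t\<^sup>2 * (p \<bullet> (H x *v q))\<bar> \<le> e * t\<^sup>2" if t: "0 < t" "t < d" for t
  proof -
    have "t * (norm p + norm q + 1) < d'"
      using t(2) \<open>0 < norm p + norm q + 1\<close> unfolding d_def by (simp only: pos_less_divide_eq)
    then have "t * (norm p + norm q) < d'"
      using t(1) by (simp add: algebra_simps)
    from second_difference_remainder_le[OF t(1) this _ rem]
    have "\<bar>f (x + t *\<^sub>R p + t *\<^sub>R q) - f (x + t *\<^sub>R p) - f (x + t *\<^sub>R q) + f x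
      - t\<^sup>2 * (p \<bullet> (H x *v q))\<bar> \<le> e / (K + 1) * K * t\<^sup>2"
      using \<open>0 \<le> K\<close> \<open>0 < e\<close> by (simp add: K_def ac_simps)
    also have "\<dots> \<le> e * t\<^sup>2"
      using \<open>0 \<le> K\<close> \<open>0 < e\<close> by (simp add: field_simps)
    finally show ?thesis .
  qed
  moreover have "0 < d"
    using \<open>0 < d'\<close> \<open>0 < norm p + norm q + 1\<close> by (simp add: d_def)
  ultimately show ?thesis using that by blast
qed

lemma hessian_symmetric: "u \<bullet> (H x *v v) = v \<bullet> (H x *v u)"
proof (rule ccontr)
  assume "u \<bullet> (H x *v v) \<noteq> v \<bullet> (H x *v u)"
  define e where "e = \<bar>u \<bullet> (H x *v v) - v \<bullet> (H x *v u)\<bar> / 4"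
  have "0 < e"
    using \<open>u \<bullet> (H x *v v) \<noteq> v \<bullet> (H x *v u)\<close> by (simp add: e_def)
  obtain d1 where "0 < d1" and d1: "\<And>t. 0 < t \<Longrightarrow> t < d1 \<Longrightarrow>
      \<bar>f (x + t *\<^sub>R u + t *\<^sub>R v) - f (x + t *\<^sub>R u) - f (x + t *\<^sub>R v) + f x - t\<^sup>2 * (u \<bullet> (H x *v v))\<bar>
        \<le> e * t\<^sup>2"
    using second_difference_estimate[OF \<open>0 < e\<close>] by blast
  obtain d2 where "0 < d2" and d2: "\<And>t. 0 < t \<Longrightarrow> t < d2 \<Longrightarrow>
      \<bar>f (x + t *\<^sub>R v + t *\<^sub>R u) - f (x + t *\<^sub>R v) - f (x + t *\<^sub>R u) + f x - t\<^sup>2 * (v \<bullet> (H x *v u))\<bar>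
        \<le> e * t\<^sup>2"
    using second_difference_estimate[OF \<open>0 < e\<close>] by blast
  define t where "t = min d1 d2 / 2"
  have t: "0 < t" "t < d1" "t < d2"
    using \<open>0 < d1\<close> \<open>0 < d2\<close> by (simp_all add: t_def)
  define \<Delta> where "\<Delta> = f (x + t *\<^sub>R u + t *\<^sub>R v) - f (x + t *\<^sub>R u) - f (x + t *\<^sub>R v) + f x"
  \<comment> \<open>the second difference is symmetric in u and v\<close>
  have "\<Delta> = f (x + t *\<^sub>R v + t *\<^sub>R u) - f (x + t *\<^sub>R v) - f (x + t *\<^sub>R u) + f x"
    by (simp add: \<Delta>_def add_ac)
  then have "\<bar>\<Delta> - t\<^sup>2 * (u \<bullet> (H x *v v))\<bar> \<le> e * t\<^sup>2" "\<bar>\<Delta> - t\<^sup>2 * (v \<bullet> (H x *v u))\<bar> \<le> e * t\<^sup>2"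
    using d1[OF t(1,2)] d2[OF t(1,3)] by (simp_all add: \<Delta>_def)
  then have "t\<^sup>2 * \<bar>u \<bullet> (H x *v v) - v \<bullet> (H x *v u)\<bar> \<le> 2 * e * t\<^sup>2"
    unfolding abs_le_iff by (simp add: right_diff_distrib abs_if)
  then show False
    using \<open>0 < e\<close> t(1) by (simp add: e_def)
qed

lemma critical_point_increment:
  assumes "g x = 0" and "0 < e"
  obtains r where "0 < r" "\<And>v. norm v < r \<Longrightarrow>
    \<exists>\<xi>. 0 < \<xi> \<and> \<xi> < 1 \<and> \<bar>f (x + v) - f x - \<xi> * (v \<bullet> (H x *v v))\<bar> \<le> \<xi> * e * (norm v)\<^sup>2"
proof -
  obtain r where "0 < r"
    and rem: "\<And>y. norm (y - x) < r \<Longrightarrow> norm (g y - g x - H x *v (y - x)) \<le> e * norm (y - x)"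
    using has_derivative_remainder_bound[OF hessian \<open>0 < e\<close>] by blast
  have "\<exists>\<xi>. 0 < \<xi> \<and> \<xi> < 1 \<and> \<bar>f (x + v) - f x - \<xi> * (v \<bullet> (H x *v v))\<bar> \<le> \<xi> * e * (norm v)\<^sup>2"
    if "norm v < r" for v
  proof -
    obtain \<xi> where \<xi>: "0 < \<xi>" "\<xi> < 1" and mvt: "f (x + v) - f x = g (x + \<xi> *\<^sub>R v) \<bullet> v"
      using mean_value_along_line[of 1 x v] by auto
    define R where "R = g (x + \<xi> *\<^sub>R v) - \<xi> *\<^sub>R (H x *v v)"
    have "\<xi> * norm v \<le> norm v"
      using \<xi> by (simp add: mult_left_le_one_le)
    then have "norm (\<xi> *\<^sub>R v) < r"
      using \<xi> that by simp
    then have "norm R \<le> e * (\<xi> * norm v)"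
      using rem[of "x + \<xi> *\<^sub>R v"] \<open>g x = 0\<close> \<xi>(1)
      by (simp add: R_def matrix_vector_mult_scaleR)
    moreover have "f (x + v) - f x - \<xi> * (v \<bullet> (H x *v v)) = R \<bullet> v"
      using mvt by (simp add: R_def inner_diff_right inner_commute)
    ultimately have "\<bar>f (x + v) - f x - \<xi> * (v \<bullet> (H x *v v))\<bar> \<le> e * (\<xi> * norm v) * norm v"
      using Cauchy_Schwarz_ineq2[of R v] mult_right_mono[of "norm R" _ "norm v"] by fastforce
    then show ?thesis
      using \<xi> by (auto simp: power2_eq_square ac_simps)
  qed
  with \<open>0 < r\<close> that show ?thesis by blast
qed

lemma local_min_if_hessian_coercive:
  assumes "g x = 0" and "0 < h" and coercive: "\<And>v. h * (norm v)\<^sup>2 \<le> v \<bullet> (H x *v v)"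
  shows "local_min f x"
proof -
  obtain r where "0 < r" and incr: "\<And>v. norm v < r \<Longrightarrow>
      \<exists>\<xi>. 0 < \<xi> \<and> \<xi> < 1 \<and> \<bar>f (x + v) - f x - \<xi> * (v \<bullet> (H x *v v))\<bar> \<le> \<xi> * h * (norm v)\<^sup>2"
    using critical_point_increment[OF \<open>g x = 0\<close> \<open>0 < h\<close>] by blast
  have "f x \<le> f y" if "y \<in> ball x r" for y
  proof -
    have "norm (y - x) < r"
      using that by (simp add: dist_norm norm_minus_commute)
    then obtain \<xi> where "0 < \<xi>"
      and "\<bar>f y - f x - \<xi> * ((y - x) \<bullet> (H x *v (y - x)))\<bar> \<le> \<xi> * h * (norm (y - x))\<^sup>2"
      using incr[of "y - x"] by auto
    moreover have "\<xi> * (h * (norm (y - x))\<^sup>2) \<le> \<xi> * ((y - x) \<bullet> (H x *v (y - x)))"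
      using coercive \<open>0 < \<xi>\<close> by (simp add: mult_left_mono)
    ultimately show ?thesis
      unfolding abs_le_iff mult.assoc by linarith
  qed
  then show ?thesis
    unfolding local_min_def using \<open>0 < r\<close> by blast
qed

lemma not_local_min_if_hessian_negative:
  assumes "g x = 0" and neg: "v \<bullet> (H x *v v) < 0"
  shows "\<not> local_min f x"
proof
  assume "local_min f x"
  then obtain r where "0 < r" and min: "\<And>y. y \<in> ball x r \<Longrightarrow> f x \<le> f y"
    unfolding local_min_def by blast
  have "v \<noteq> 0" using neg by auto
  define e where "e = - (v \<bullet> (H x *v v)) / (2 * (norm v)\<^sup>2)"
  have "0 < e"
    using neg \<open>v \<noteq> 0\<close> unfolding e_def by (intro divide_pos_pos) auto
  obtain r' where "0 < r'" and incr: "\<And>w. norm w < r' \<Longrightarrow>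
      \<exists>\<xi>. 0 < \<xi> \<and> \<xi> < 1 \<and> \<bar>f (x + w) - f x - \<xi> * (w \<bullet> (H x *v w))\<bar> \<le> \<xi> * e * (norm w)\<^sup>2"
    using critical_point_increment[OF \<open>g x = 0\<close> \<open>0 < e\<close>] by blast
  define t where "t = min r r' / (2 * norm v)"
  have "0 < t" using \<open>0 < r\<close> \<open>0 < r'\<close> \<open>v \<noteq> 0\<close> by (simp add: t_def)
  have "norm (t *\<^sub>R v) = min r r' / 2"
    using \<open>0 < r\<close> \<open>0 < r'\<close> \<open>v \<noteq> 0\<close> by (simp add: t_def)
  moreover have "0 < min r r'"
    using \<open>0 < r\<close> \<open>0 < r'\<close> by simp
  ultimately have "norm (t *\<^sub>R v) < min r r'"
    by linarith
  then obtain \<xi> where "0 < \<xi>"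
    and \<xi>: "\<bar>f (x + t *\<^sub>R v) - f x - \<xi> * (t\<^sup>2 * (v \<bullet> (H x *v v)))\<bar> \<le> \<xi> * e * (t\<^sup>2 * (norm v)\<^sup>2)"
    using incr[of "t *\<^sub>R v"] by (auto simp: matrix_vector_mult_scaleR power2_eq_square ac_simps)
  \<comment> \<open>with this e the remainder absorbs only half of the negative curvature term\<close>
  have "\<xi> * e * (t\<^sup>2 * (norm v)\<^sup>2) = \<xi> * t\<^sup>2 * (e * (norm v)\<^sup>2)"
    by (simp add: ac_simps)
  also have "\<dots> = - (\<xi> * (t\<^sup>2 * (v \<bullet> (H x *v v)))) / 2"
    using \<open>v \<noteq> 0\<close> by (simp add: e_def)
  finally have "f (x + t *\<^sub>R v) - f x \<le> \<xi> * (t\<^sup>2 * (v \<bullet> (H x *v v))) / 2"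
    using \<xi> unfolding abs_le_iff by linarith
  also have "\<dots> < 0"
    using \<open>0 < \<xi>\<close> \<open>0 < t\<close> neg by (simp add: mult_pos_neg)
  finally have "f (x + t *\<^sub>R v) < f x" by simp
  moreover have "x + t *\<^sub>R v \<in> ball x r"
    using \<open>norm (t *\<^sub>R v) < min r r'\<close> by (simp add: dist_norm)
  ultimately show False
    using min by fastforce
qed

end

section \<open>The modified Newton map\<close>

lemma newton_map_error_le:
  fixes g :: "real^'n::finite \<Rightarrow> real^'n" and H :: "real^'n \<Rightarrow> real^'n^'n"
    and xs :: "real^'n" and c :: real
  defines "M \<equiv> H xs + c *\<^sub>R mat 1"
  assumes "0 < m" and coercive: "\<And>v. m * (norm v)\<^sup>2 \<le> v \<bullet> (M *v v)"
    and "eps x = c" and \<eta>: "norm (H x - H xs) \<le> \<eta>" "\<eta> \<le> m / 2" "\<eta> \<le> 1"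
    and \<rho>: "norm (g x - H xs *v (x - xs)) \<le> \<rho> * norm (x - xs)" "\<rho> \<le> 1"
  shows "norm (M *v (newton_map g H eps x - xs) - c *\<^sub>R (x - xs))
    \<le> (\<eta> * (2 * (\<bar>c\<bar> + 2) / m + 1) + \<rho>) * norm (x - xs)"
proof -
  define D where "D = H x - H xs"
  have Mx: "M + D = H x + eps x *\<^sub>R mat 1"
    by (simp add: M_def D_def \<open>eps x = c\<close>)
  have "norm ((M + D) - M) \<le> m / 2"
    using \<eta> by (simp add: D_def)
  then have "pos_def_matrix (M + D)"
    using \<open>0 < m\<close> coercive_imp_pos_def_matrix[OF _ coercive_perturbation[OF coercive]] by simp
  moreover have "newton_map g H eps x - xs = (x - xs) - matrix_inv (M + D) *v g x"
    unfolding newton_map_def Mx by simp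
  ultimately have "(M + D) *v (newton_map g H eps x - xs) = (M + D) *v (x - xs) - g x"
    by (simp add: matrix_vector_mult_diff_distrib matrix_vector_mult_matrix_inv pos_def_matrix_invertible)
  also have "\<dots> = D *v (x - xs) + c *\<^sub>R (x - xs) - (g x - H xs *v (x - xs))"
    by (simp add: M_def matrix_vector_mult_add_rdistrib scaleR_matrix_vector_assoc[symmetric])
  finally show ?thesis
    using coercive_perturbed_system_estimate[OF \<open>0 < m\<close> coercive _ \<eta>(2,3) \<rho>] \<eta>(1)
    by (simp add: D_def)
qed

lemma newton_map_linearization:
  fixes g :: "real^'n::finite \<Rightarrow> real^'n" and H :: "real^'n \<Rightarrow> real^'n^'n"
  assumes "g xs = 0" and deriv: "(g has_derivative (\<lambda>h. H xs *v h)) (at xs)"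
    and cont: "continuous (at xs) H" and eps_const: "\<exists>r>0. \<forall>x\<in>ball xs r. eps x = eps xs"
    and posdef: "pos_def_matrix (H xs + eps xs *\<^sub>R mat 1)" and "0 < \<delta>"
  obtains r where "0 < r" "\<And>x. norm (x - xs) < r \<Longrightarrow>
    norm ((H xs + eps xs *\<^sub>R mat 1) *v (newton_map g H eps x - xs) - eps xs *\<^sub>R (x - xs))
      \<le> \<delta> * norm (x - xs)"
proof -
  obtain m where "0 < m" and coercive: "\<And>v. m * (norm v)\<^sup>2 \<le> v \<bullet> ((H xs + eps xs *\<^sub>R mat 1) *v v)"
    using pos_def_matrix_coercive posdef by blast
  define L where "L = 2 * (\<bar>eps xs\<bar> + 2) / m"
  define \<eta> where "\<eta> = min (m / 2) (min 1 (\<delta> / (2 * (L + 1))))"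
  define \<rho> where "\<rho> = min 1 (\<delta> / 2)"
  have "0 \<le> L" using \<open>0 < m\<close> by (simp add: L_def)
  have "0 < \<eta>" using \<open>0 < m\<close> \<open>0 < \<delta>\<close> \<open>0 \<le> L\<close> by (simp add: \<eta>_def)
  have \<eta>: "\<eta> \<le> m / 2" "\<eta> \<le> 1" and "\<rho> \<le> 1"
    unfolding \<eta>_def \<rho>_def by (rule min.cobounded1 min.coboundedI2[OF min.cobounded1])+
  have "\<eta> \<le> \<delta> / (2 * (L + 1))"
    by (simp add: \<eta>_def)
  then have "\<eta> * (L + 1) \<le> \<delta> / (2 * (L + 1)) * (L + 1)"
    using \<open>0 \<le> L\<close> by (intro mult_right_mono) auto
  also have "\<dots> = \<delta> / 2"
    using \<open>0 \<le> L\<close> by (auto simp: field_simps)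
  finally have "\<eta> * (L + 1) + \<rho> \<le> \<delta>"
    by (simp add: \<rho>_def)
  obtain r1 where "0 < r1" and r1: "\<And>x. dist x xs < r1 \<Longrightarrow> dist (H x) (H xs) < \<eta>"
    using cont \<open>0 < \<eta>\<close> unfolding continuous_at_eps_delta by blast
  obtain r2 where "0 < r2" and r2: "\<And>x. norm (x - xs) < r2 \<Longrightarrow>
      norm (g x - g xs - H xs *v (x - xs)) \<le> \<rho> * norm (x - xs)"
    using has_derivative_remainder_bound[OF deriv, of \<rho>] \<open>0 < \<delta>\<close> by (auto simp: \<rho>_def)
  obtain r3 where "0 < r3" and r3: "\<And>x. x \<in> ball xs r3 \<Longrightarrow> eps x = eps xs"
    using eps_const by blast
  define r where "r = min r1 (min r2 r3)"
  have "norm ((H xs + eps xs *\<^sub>R mat 1) *v (newton_map g H eps x - xs) - eps xs *\<^sub>R (x - xs))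
      \<le> \<delta> * norm (x - xs)" if x: "norm (x - xs) < r" for x
  proof -
    have "eps x = eps xs" "norm (H x - H xs) \<le> \<eta>"
      "norm (g x - H xs *v (x - xs)) \<le> \<rho> * norm (x - xs)"
      using x r1[of x] r2[of x] r3[of x] \<open>g xs = 0\<close>
      by (simp_all add: r_def dist_norm norm_minus_commute)
    from newton_map_error_le[where g = g and H = H and eps = eps and x = x and xs = xs and c = "eps xs",
        OF \<open>0 < m\<close> coercive this(1,2) \<eta> this(3) \<open>\<rho> \<le> 1\<close>]
    have "norm ((H xs + eps xs *\<^sub>R mat 1) *v (newton_map g H eps x - xs) - eps xs *\<^sub>R (x - xs))
        \<le> (\<eta> * (L + 1) + \<rho>) * norm (x - xs)"
      by (simp add: L_def)
    also have "\<dots> \<le> \<delta> * norm (x - xs)"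
      using \<open>\<eta> * (L + 1) + \<rho> \<le> \<delta>\<close> by (simp add: mult_right_mono)
    finally show ?thesis .
  qed
  moreover have "0 < r" using \<open>0 < r1\<close> \<open>0 < r2\<close> \<open>0 < r3\<close> by (simp add: r_def)
  ultimately show ?thesis using that by blast
qed

lemma newton_map_loc_asym_stable:
  fixes g :: "real^'n::finite \<Rightarrow> real^'n" and H :: "real^'n \<Rightarrow> real^'n^'n"
  assumes "g xs = 0" and "(g has_derivative (\<lambda>h. H xs *v h)) (at xs)"
    and "continuous (at xs) H" and "\<exists>r>0. \<forall>x\<in>ball xs r. eps x = eps xs"
    and "pos_def_matrix (H xs + eps xs *\<^sub>R mat 1)" and "0 \<le> eps xs"
    and "0 < h" and coercive: "\<And>v. h * (norm v)\<^sup>2 \<le> v \<bullet> (H xs *v v)"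
  shows "loc_asym_stable (newton_map g H eps) xs"
proof -
  obtain r where "0 < r" and approx: "\<And>x. norm (x - xs) < r \<Longrightarrow>
      norm ((H xs + eps xs *\<^sub>R mat 1) *v (newton_map g H eps x - xs) - eps xs *\<^sub>R (x - xs))
        \<le> h / 2 * norm (x - xs)"
    using newton_map_linearization[OF assms(1-5), of "h / 2"] \<open>0 < h\<close> by auto
  define q where "q = (eps xs + h / 2) / (eps xs + h)"
  have "0 \<le> q" "q < 1"
    using \<open>0 \<le> eps xs\<close> \<open>0 < h\<close> by (simp_all add: q_def)
  moreover have "dist (newton_map g H eps x) xs \<le> q * dist x xs" if "dist x xs < r" for x
    using coercive_approx_contraction[OF \<open>0 \<le> eps xs\<close> \<open>0 < h\<close> coercive approx] that
    by (simp add: q_def dist_norm)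
  ultimately show ?thesis
    using loc_asym_stable_if_contraction[OF \<open>0 < r\<close>] by blast
qed

lemma unstable_if_quadratic_form_decreases:
  fixes \<Phi> :: "real^'n::finite \<Rightarrow> real^'n" and A :: "real^'n^'n"
  assumes "0 < r" and "0 < \<kappa>" and neg: "v \<bullet> (A *v v) < 0"
    and decrease: "\<And>x. dist x xs < r \<Longrightarrow>
      (\<Phi> x - xs) \<bullet> (A *v (\<Phi> x - xs)) + \<kappa> * (dist (\<Phi> x) xs)\<^sup>2 \<le> (x - xs) \<bullet> (A *v (x - xs))"
  shows "unstable \<Phi> xs"
proof -
  define V where "V x = - ((x - xs) \<bullet> (A *v (x - xs)))" for x
  define B where "B = norm A + 1"
  have "0 < B"
    by (simp add: B_def add_nonneg_pos)
  have V_le: "V x \<le> B * (dist x xs)\<^sup>2" for x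
  proof -
    have "V x \<le> norm A * (dist x xs)\<^sup>2"
      using abs_le_D2[OF abs_quadratic_form_le[of "x - xs" A]] by (simp add: V_def dist_norm)
    also have "\<dots> \<le> B * (dist x xs)\<^sup>2"
      by (simp add: B_def mult_right_mono)
    finally show ?thesis .
  qed
  have "(1 + \<kappa> / B) * V x \<le> V (\<Phi> x)" if "dist x xs < r" for x
  proof -
    have step: "V x + \<kappa> * (dist (\<Phi> x) xs)\<^sup>2 \<le> V (\<Phi> x)"
      using decrease[OF that] by (simp add: V_def)
    moreover have "0 \<le> \<kappa> * (dist (\<Phi> x) xs)\<^sup>2"
      using \<open>0 < \<kappa>\<close> by simp
    ultimately have "V x \<le> V (\<Phi> x)"
      by linarith
    then have "\<kappa> / B * V x \<le> \<kappa> / B * V (\<Phi> x)"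
      using \<open>0 < \<kappa>\<close> \<open>0 < B\<close> by (intro mult_left_mono) auto
    also have "\<dots> \<le> \<kappa> / B * (B * (dist (\<Phi> x) xs)\<^sup>2)"
      using V_le \<open>0 < \<kappa>\<close> \<open>0 < B\<close> by (intro mult_left_mono) auto
    also have "\<dots> = \<kappa> * (dist (\<Phi> x) xs)\<^sup>2"
      using \<open>0 < B\<close> by simp
    finally show ?thesis
      using step by (simp add: algebra_simps)
  qed
  moreover have "\<exists>x. dist x xs < d \<and> 0 < V x" if "0 < d" for d
  proof -
    have "v \<noteq> 0" using neg by auto
    define t where "t = d / (2 * norm v)"
    have "0 < t" using \<open>0 < d\<close> \<open>v \<noteq> 0\<close> by (simp add: t_def)
    have "dist (xs + t *\<^sub>R v) xs < d"
      using \<open>0 < d\<close> \<open>v \<noteq> 0\<close> by (simp add: t_def dist_norm)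
    moreover have "0 < V (xs + t *\<^sub>R v)"
      using neg \<open>0 < t\<close> by (simp add: V_def matrix_vector_mult_scaleR mult_pos_neg)
    ultimately show ?thesis by blast
  qed
  moreover have "V x \<le> B * r\<^sup>2" if "dist x xs < r" for x
  proof -
    have "V x \<le> B * (dist x xs)\<^sup>2" by (rule V_le)
    also have "\<dots> \<le> B * r\<^sup>2"
      using that \<open>0 < B\<close> by (intro mult_left_mono power_mono) auto
    finally show ?thesis .
  qed
  moreover have "0 < \<kappa> / B"
    using \<open>0 < \<kappa>\<close> \<open>0 < B\<close> by simp
  ultimately show ?thesis
    using unstable_if_growing_function[OF \<open>0 < r\<close>] by blast
qed

lemma pos_def_shift_pos:
  fixes A :: "real^'n::finite^'n"
  assumes "pos_def_matrix (A + c *\<^sub>R mat 1)" and neg: "v \<bullet> (A *v v) < 0"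
  shows "0 < c"
proof -
  have "v \<noteq> 0" using neg by auto
  then have "0 < v \<bullet> ((A + c *\<^sub>R mat 1) *v v)"
    using assms(1) unfolding pos_def_matrix_def by blast
  then have "0 < c * (norm v)\<^sup>2"
    using neg by (simp add: matrix_vector_mult_add_rdistrib scaleR_matrix_vector_assoc[symmetric]
        inner_add_right power2_norm_eq_inner)
  then show ?thesis
    by (simp add: zero_less_mult_iff)
qed

lemma newton_map_unstable:
  fixes g :: "real^'n::finite \<Rightarrow> real^'n" and H :: "real^'n \<Rightarrow> real^'n^'n"
  assumes "g xs = 0" and "(g has_derivative (\<lambda>h. H xs *v h)) (at xs)"
    and "continuous (at xs) H" and "\<exists>r>0. \<forall>x\<in>ball xs r. eps x = eps xs"
    and posdef: "pos_def_matrix (H xs + eps xs *\<^sub>R mat 1)"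
    and sym: "\<And>u v. u \<bullet> (H xs *v v) = v \<bullet> (H xs *v u)" and "invertible (H xs)"
    and neg: "v \<bullet> (H xs *v v) < 0"
  shows "unstable (newton_map g H eps) xs"
proof -
  have psd: "0 \<le> w \<bullet> ((H xs + eps xs *\<^sub>R mat 1) *v w)" for w
    using posdef unfolding pos_def_matrix_def by (cases "w = 0") (auto intro: less_imp_le)
  obtain \<delta> \<kappa> where "0 < \<delta>" "0 < \<kappa>" and decrease: "\<And>y y'.
      norm ((H xs + eps xs *\<^sub>R mat 1) *v y' - eps xs *\<^sub>R y) \<le> \<delta> * norm y \<Longrightarrow>
      y' \<bullet> (H xs *v y') + \<kappa> * (norm y')\<^sup>2 \<le> y \<bullet> (H xs *v y)"
    using symmetric_quadratic_form_decrease[OF sym \<open>invertible (H xs)\<close>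
        pos_def_shift_pos[OF posdef neg] psd] by blast
  obtain r where "0 < r" and approx: "\<And>x. norm (x - xs) < r \<Longrightarrow>
      norm ((H xs + eps xs *\<^sub>R mat 1) *v (newton_map g H eps x - xs) - eps xs *\<^sub>R (x - xs))
        \<le> \<delta> * norm (x - xs)"
    using newton_map_linearization[OF assms(1-5) \<open>0 < \<delta>\<close>] by blast
  show ?thesis
    by (rule unstable_if_quadratic_form_decreases[OF \<open>0 < r\<close> \<open>0 < \<kappa>\<close> neg])
      (use decrease[OF approx] in \<open>simp add: dist_norm\<close>)
qed

theorem theorem1:
  fixes f :: "real^'n::finite \<Rightarrow> real"
    and g :: "real^'n \<Rightarrow> real^'n"
    and H :: "real^'n \<Rightarrow> real^'n^'n"
    and eps :: "real^'n \<Rightarrow> real"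
    and xs :: "real^'n"
  assumes grad: "\<And>x. (f has_derivative (\<lambda>h. g x \<bullet> h)) (at x)"
    and hess: "\<And>x. (g has_derivative (\<lambda>h. H x *v h)) (at x)"
    and hess_cont: "continuous_on UNIV H"
    and eps_nonneg: "\<And>x. eps x \<ge> 0"
    and equil: "g xs = 0"
    and hess_inv: "invertible (H xs)"
    and hess_diff: "\<exists>r>0. \<forall>x\<in>ball xs r. H differentiable (at x)"
    and eps_const: "\<exists>r>0. \<forall>x\<in>ball xs r. eps x = eps xs"
    and posdef: "pos_def_matrix (H xs + eps xs *\<^sub>R mat 1)"
  shows "(local_min f xs \<longrightarrow> loc_asym_stable (newton_map g H eps) xs) \<and>
         (\<not> local_min f xs \<longrightarrow> unstable (newton_map g H eps) xs)"
proof -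
  interpret gradient_hessian f g H
    using grad hess by unfold_locales
  have cont: "continuous (at xs) H"
    using hess_cont by (simp add: continuous_on_eq_continuous_at)
  note newton = equil hess cont eps_const posdef
  show ?thesis
  proof (cases "\<forall>v. 0 \<le> v \<bullet> (H xs *v v)")
    case True
    then have "pos_def_matrix (H xs)"
      using symmetric_psd_invertible_pos_def hessian_symmetric hess_inv by blast
    then obtain h where "0 < h" "\<And>v. h * (norm v)\<^sup>2 \<le> v \<bullet> (H xs *v v)"
      using pos_def_matrix_coercive by blast
    then show ?thesis
      using local_min_if_hessian_coercive[OF equil] newton_map_loc_asym_stable[OF newton eps_nonneg]
      by blast
  next
    case False
    then obtain v where "v \<bullet> (H xs *v v) < 0"
      by (auto simp: not_le)
    then show ?thesis
      using not_local_min_if_hessian_negative[OF equil]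
        newton_map_unstable[OF newton hessian_symmetric hess_inv] by blast
  qed
qed

end
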